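(* There exists a family $(\mathcal{A}_n)_{n\in\mathbb{N}}$ of (non-deterministic) generalised Büchi automata such that for every $n$, $\mathcal{A}_n$ has $n+1$ states and uses $2$ output colours, and every generalised Büchi automaton recognising $\mathcal{L}(\mathcal{A}_n)$ with the minimal number of states (among generalised Büchi automata recognising $\mathcal{L}(\mathcal{A}_n)$) uses at least $2^n$ output colours.
   Context: An automaton is a tuple $(Q,\Sigma,q_{\mathrm{init}},\Delta,\Gamma,\mathrm{col},W)$ with finite state set, finite input alphabet, initial state, transitions $\Delta\subseteq Q\times\Sigma\times Q$ (arbitrary, possibly non-deterministic), output alphabet $\Gamma$, labelling $\mathrm{col}:\Delta\to\Gamma$, acceptance condition $W\subseteq\Gamma^\omega$. A run on $w=a_1a_2\cdots$ is a sequence $(q_0,a_1,q_1)(q_1,a_2,q_2)\cdots$ of transitions with $q_0=q_{\mathrm{init}}$, accepting if its label sequence is in $W$; $\mathcal{L}(\mathcal{A})$ is the set of words with an accepting run. A generalised Büchi automaton with finite output colour set $C$ has $\Gamma=2^C$ and $W=\{x : \text{every } c\in C \text{ occurs in infinitely many letters of } x\}$; its number of output colours is $|C|$. *)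

theory Defs
  imports Main
begin

record gba =
  states :: "nat set"
  alphabet :: "nat set"
  init :: nat
  trans :: "(nat \<times> nat \<times> nat) set"
  colours :: "nat set"
  col :: "nat \<times> nat \<times> nat \<Rightarrow> nat set"

definition wf_gba :: "gba \<Rightarrow> bool" where
  "wf_gba A \<longleftrightarrow> finite (states A) \<and> finite (alphabet A) \<and> init A \<in> states A
     \<and> trans A \<subseteq> states A \<times> alphabet A \<times> states A
     \<and> finite (colours A) \<and> (\<forall>t \<in> trans A. col A t \<subseteq> colours A)"

definition words :: "gba \<Rightarrow> (nat \<Rightarrow> nat) set" where
  "words A = {w. \<forall>i. w i \<in> alphabet A}"

definition is_run :: "gba \<Rightarrow> (nat \<Rightarrow> nat) \<Rightarrow> (nat \<Rightarrow> nat) \<Rightarrow> bool" where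
  "is_run A w r \<longleftrightarrow> r 0 = init A \<and> (\<forall>i. (r i, w i, r (Suc i)) \<in> trans A)"

definition accepting_run :: "gba \<Rightarrow> (nat \<Rightarrow> nat) \<Rightarrow> (nat \<Rightarrow> nat) \<Rightarrow> bool" where
  "accepting_run A w r \<longleftrightarrow> is_run A w r \<and>
     (\<forall>c \<in> colours A. \<exists>\<^sub>\<infinity> i. c \<in> col A (r i, w i, r (Suc i)))"

definition lang :: "gba \<Rightarrow> (nat \<Rightarrow> nat) set" where
  "lang A = {w \<in> words A. \<exists>r. accepting_run A w r}"

definition recognises_same :: "gba \<Rightarrow> gba \<Rightarrow> bool" where
  "recognises_same B A \<longleftrightarrow> wf_gba B \<and> alphabet B = alphabet A \<and> lang B = lang A"

end

theory Submission
  imports Defs "HOL-Library.Omega_Words_Fun"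
begin

(* Letters 2i and 2i+1 form the i-th of n pairs. A_n accepts the words in which both
   letters of some pair recur: it guesses the pair i, moves to state i+1 and stays there,
   and its two colours mark the two letters of that pair. The same language is recognised
   with a single state by taking as colours the 2^n transversals (one letter chosen from
   each pair): a set of letters contains a pair iff it meets every transversal.
   Conversely, a one-state automaton accepts an ultimately periodic word iff its letters
   jointly show every colour. The periodic word through a transversal T is rejected, so
   some colour d_T is missing on all letters of T; the periodic word through two
   distinct transversals T, T' contains a pair and is accepted, so d_T differs from d_T'.
   Hence there are at least 2^n colours. *)

lemma range_iter:
  assumes "xs \<noteq> []"
  shows "range xs\<^sup>\<omega> = set xs"
proof
  show "range xs\<^sup>\<omega> \<subseteq> set xs" using assms by auto
  show "set xs \<subseteq> range xs\<^sup>\<omega>"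
  proof
    fix a assume "a \<in> set xs"
    then obtain i where "i < length xs" "xs ! i = a" by (auto simp: in_set_conv_nth)
    then have "xs\<^sup>\<omega> i = a" using assms by simp
    then show "a \<in> range xs\<^sup>\<omega>" by blast
  qed
qed

lemma run_in_states:
  assumes "wf_gba B" "is_run B w r"
  shows "r j \<in> states B"
proof (cases j)
  case 0
  then show ?thesis using assms by (simp add: is_run_def wf_gba_def)
next
  case (Suc i)
  have "(r i, w i, r j) \<in> trans B" using assms(2) Suc by (simp add: is_run_def)
  then show ?thesis using assms(1) by (auto simp: wf_gba_def)
qed

lemma INFM_letter_iff_limit:
  assumes "wf_gba B" "w \<in> words B"
  shows "(\<exists>\<^sub>\<infinity>j. P (w j)) \<longleftrightarrow> (\<exists>a\<in>limit w. P a)"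
proof -
  let ?A = "{a \<in> alphabet B. P a}"
  have letters: "range w \<subseteq> alphabet B" using assms(2) by (auto simp: words_def)
  have "(\<exists>\<^sub>\<infinity>j. P (w j)) \<longleftrightarrow> (\<exists>\<^sub>\<infinity>j. w j \<in> ?A)" using assms(2) by (simp add: words_def)
  also have "\<dots> \<longleftrightarrow> limit w \<inter> ?A \<noteq> {}"
    using assms(1) by (intro fin_ex_inf_eq_limit) (simp add: wf_gba_def)
  also have "\<dots> \<longleftrightarrow> (\<exists>a\<in>limit w. P a)" using limit_in_range[of w] letters by auto
  finally show ?thesis .
qed

lemma accepting_run_eventually_const:
  assumes "wf_gba B" "w \<in> words B" "is_run B w r" "\<And>j. j \<ge> j0 \<Longrightarrow> r j = k"
  shows "accepting_run B w r \<longleftrightarrow> (\<forall>c\<in>colours B. \<exists>a\<in>limit w. c \<in> col B (k, a, k))"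
proof -
  have "(\<exists>\<^sub>\<infinity>j. c \<in> col B (r j, w j, r (Suc j))) \<longleftrightarrow> (\<exists>\<^sub>\<infinity>j. c \<in> col B (k, w j, k))" for c
    by (rule frequently_cong[OF MOST_ge_nat[of j0]]) (simp add: assms(4))
  also have "\<dots> c \<longleftrightarrow> (\<exists>a\<in>limit w. c \<in> col B (k, a, k))" for c
    by (rule INFM_letter_iff_limit[OF assms(1,2)])
  finally show ?thesis using assms(3) by (simp add: accepting_run_def)
qed

lemma lang_single_state:
  assumes "wf_gba B" "states B = {s}"
  shows "w \<in> lang B \<longleftrightarrow> w \<in> words B \<and> (\<forall>j. (s, w j, s) \<in> trans B) \<and>
    (\<forall>c\<in>colours B. \<exists>a\<in>limit w. c \<in> col B (s, a, s))"
proof -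
  have "is_run B w r \<Longrightarrow> r = (\<lambda>_. s)" for r
    using run_in_states[OF assms(1)] assms(2) by blast
  moreover have "is_run B w (\<lambda>_. s) \<longleftrightarrow> (\<forall>j. (s, w j, s) \<in> trans B)"
    using assms by (auto simp: is_run_def wf_gba_def)
  ultimately show ?thesis
    using accepting_run_eventually_const[OF assms(1), of w "\<lambda>_. s" 0 s]
    unfolding lang_def accepting_run_def by auto
qed

definition has_pair :: "nat \<Rightarrow> nat set \<Rightarrow> bool" where
  "has_pair n L \<longleftrightarrow> (\<exists>i<n. 2 * i \<in> L \<and> Suc (2 * i) \<in> L)"

definition transversal :: "nat \<Rightarrow> nat \<Rightarrow> nat list" where
  "transversal n c = map (\<lambda>i. 2 * i + of_bool (bit c i)) [0..<n]"

lemma mem_transversal_iff: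
  "a \<in> set (transversal n c) \<longleftrightarrow> a div 2 < n \<and> (odd a \<longleftrightarrow> bit c (a div 2))"
proof
  assume "a div 2 < n \<and> (odd a \<longleftrightarrow> bit c (a div 2))"
  moreover have "a = 2 * (a div 2) + a mod 2" by simp
  ultimately show "a \<in> set (transversal n c)"
    unfolding transversal_def by (auto simp: odd_iff_mod_2_eq_one intro!: image_eqI[of _ _ "a div 2"])
qed (auto simp: transversal_def)

lemma set_transversal_subset: "set (transversal n c) \<subseteq> {..<2 * n}"
  by (auto simp: mem_transversal_iff)

lemma transversal_eq_Nil_iff [simp]: "transversal n c = [] \<longleftrightarrow> n = 0"
  by (simp add: transversal_def)

lemma not_has_pair_transversal: "\<not> has_pair n (set (transversal n c))"
  by (auto simp: has_pair_def mem_transversal_iff)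

lemma bit_differs_below:
  fixes c c' :: nat
  assumes "c < 2 ^ n" "c' < 2 ^ n" "c \<noteq> c'"
  obtains i where "i < n" "bit c i \<noteq> bit c' i"
proof -
  have "take_bit n c \<noteq> take_bit n c'" using assms by (simp add: take_bit_nat_eq_self)
  then show ?thesis using that by (auto simp: bit_eq_iff bit_take_bit_iff)
qed

lemma has_pair_transversal_union:
  assumes "c < 2 ^ n" "c' < 2 ^ n" "c \<noteq> c'"
  shows "has_pair n (set (transversal n c) \<union> set (transversal n c'))"
proof -
  obtain i where "i < n" "bit c i \<noteq> bit c' i" using bit_differs_below[OF assms] .
  then show ?thesis unfolding has_pair_def mem_transversal_iff Un_iff
    by (intro exI[of _ i]) auto
qed

lemma meets_all_transversals_iff_has_pair:
  "(\<forall>c<2 ^ n. L \<inter> set (transversal n c) \<noteq> {}) \<longleftrightarrow> has_pair n L"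
proof
  assume meets: "\<forall>c<2 ^ n. L \<inter> set (transversal n c) \<noteq> {}"
  show "has_pair n L"
  proof (rule ccontr)
    assume no_pair: "\<not> has_pair n L"
    define c :: nat where "c = horner_sum of_bool 2 (map (\<lambda>i. 2 * i \<in> L) [0..<n])"
    have "c < 2 ^ n"
      unfolding c_def using horner_sum_of_bool_2_less[of "map (\<lambda>i. 2 * i \<in> L) [0..<n]"] by simp
    moreover have "bit c i \<longleftrightarrow> i < n \<and> 2 * i \<in> L" for i
      by (auto simp: c_def bit_horner_sum_bit_iff)
    then have "L \<inter> set (transversal n c) = {}"
      using no_pair by (auto simp: has_pair_def mem_transversal_iff elim!: oddE evenE)
    ultimately show False using meets by blast
  qed
next
  assume "has_pair n L"
  then obtain i where i: "i < n" "2 * i \<in> L" "Suc (2 * i) \<in> L" by (auto simp: has_pair_def)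
  have "2 * i + of_bool (bit c i) \<in> L \<inter> set (transversal n c)" for c
    using i by (cases "bit c i") (auto simp: mem_transversal_iff)
  then show "\<forall>c<2 ^ n. L \<inter> set (transversal n c) \<noteq> {}" by blast
qed

lemma iter_in_lang_single_state:
  assumes "wf_gba B" "states B = {s}" "xs \<noteq> []"
  shows "xs\<^sup>\<omega> \<in> lang B \<longleftrightarrow> set xs \<subseteq> alphabet B \<and> (\<forall>a\<in>set xs. (s, a, s) \<in> trans B) \<and>
    colours B \<subseteq> (\<Union>a\<in>set xs. col B (s, a, s))"
proof -
  have "xs\<^sup>\<omega> \<in> words B \<longleftrightarrow> range xs\<^sup>\<omega> \<subseteq> alphabet B"
    by (auto simp: words_def simp del: iter_nth)
  then have "xs\<^sup>\<omega> \<in> words B \<longleftrightarrow> set xs \<subseteq> alphabet B"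
    using range_iter[OF assms(3)] by simp
  moreover have "(\<forall>j. (s, xs\<^sup>\<omega> j, s) \<in> trans B) \<longleftrightarrow> (\<forall>a\<in>set xs. (s, a, s) \<in> trans B)"
    using range_iter[OF assms(3)] by (metis rangeE rangeI)
  ultimately show ?thesis
    using lang_single_state[OF assms(1,2)] assms(3) by auto
qed

definition pair_lang :: "nat \<Rightarrow> (nat \<Rightarrow> nat) set" where
  "pair_lang n = {w. range w \<subseteq> {..<2 * n} \<and> has_pair n (limit w)}"

lemma iter_in_pair_lang:
  "xs \<noteq> [] \<Longrightarrow> set xs \<subseteq> {..<2 * n} \<Longrightarrow> xs\<^sup>\<omega> \<in> pair_lang n \<longleftrightarrow> has_pair n (set xs)"
  by (simp add: pair_lang_def range_iter del: iter_nth)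

lemma single_state_pair_lang_card_colours:
  assumes wf: "wf_gba B" and single: "states B = {s}" and "0 < n"
    and lang: "lang B = pair_lang n"
  shows "2 ^ n \<le> card (colours B)"
proof -
  define seen where "seen X = (\<Union>a\<in>X. col B (s, a, s))" for X
  define full where "full = [0..<2 * n]"
  have "full \<noteq> []" "set full = {..<2 * n}" "has_pair n (set full)"
    using \<open>0 < n\<close> by (auto simp: full_def has_pair_def)
  then have "{..<2 * n} \<subseteq> alphabet B" "\<forall>a<2 * n. (s, a, s) \<in> trans B"
    using iter_in_lang_single_state[OF wf single, of full] iter_in_pair_lang[of full n] lang
    by auto
  then have accepts: "has_pair n (set xs) \<longleftrightarrow> colours B \<subseteq> seen (set xs)"
    if "xs \<noteq> []" "set xs \<subseteq> {..<2 * n}" for xs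
    using that iter_in_lang_single_state[OF wf single that(1)] iter_in_pair_lang[OF that] lang
    unfolding seen_def by blast
  have "\<exists>d. d \<in> colours B - seen (set (transversal n c))" for c
    using accepts[of "transversal n c"] \<open>0 < n\<close> set_transversal_subset not_has_pair_transversal
    by auto
  then obtain missed where missed: "\<And>c. missed c \<in> colours B - seen (set (transversal n c))"
    by metis
  have "inj_on missed {..<2 ^ n}"
  proof (rule inj_onI, rule ccontr)
    fix c c' assume "c \<in> {..<2 ^ n}" "c' \<in> {..<2 ^ n}" "missed c = missed c'" "c \<noteq> c'"
    then have "has_pair n (set (transversal n c @ transversal n c'))"
      using has_pair_transversal_union by simp
    moreover have "transversal n c @ transversal n c' \<noteq> []" using \<open>0 < n\<close> by simp
    moreover have "set (transversal n c @ transversal n c') \<subseteq> {..<2 * n}"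
      using set_transversal_subset by auto
    ultimately have "colours B \<subseteq> seen (set (transversal n c @ transversal n c'))"
      using accepts by blast
    then have "colours B \<subseteq> seen (set (transversal n c)) \<union> seen (set (transversal n c'))"
      by (simp add: seen_def)
    then show False using missed[of c] missed[of c'] \<open>missed c = missed c'\<close> by auto
  qed
  moreover have "missed ` {..<2 ^ n} \<subseteq> colours B" using missed by blast
  moreover have "finite (colours B)" using wf by (simp add: wf_gba_def)
  ultimately show ?thesis using card_inj_on_le by fastforce
qed

definition transversal_gba :: "nat \<Rightarrow> gba" where
  "transversal_gba n = \<lparr>states = {0}, alphabet = {..<2 * n}, init = 0,
     trans = {0} \<times> {..<2 * n} \<times> {0}, colours = {..<2 ^ n},
     col = (\<lambda>(_, a, _). {c. c < 2 ^ n \<and> a \<in> set (transversal n c)})\<rparr>"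

lemma wf_transversal_gba: "wf_gba (transversal_gba n)"
  by (auto simp: wf_gba_def transversal_gba_def)

lemma lang_transversal_gba: "lang (transversal_gba n) = pair_lang n"
proof -
  have "w \<in> lang (transversal_gba n) \<longleftrightarrow>
      range w \<subseteq> {..<2 * n} \<and> (\<forall>c<2 ^ n. limit w \<inter> set (transversal n c) \<noteq> {})" for w
    by (subst lang_single_state[OF wf_transversal_gba, where s = 0])
      (auto simp: transversal_gba_def words_def)
  then show ?thesis
    by (auto simp: pair_lang_def meets_all_transversals_iff_has_pair)
qed

definition pair_gba :: "nat \<Rightarrow> gba" where
  "pair_gba n = \<lparr>states = {..n}, alphabet = {..<2 * n}, init = 0,
     trans = {(p, a, q). p \<le> n \<and> q \<le> n \<and> a < 2 * n \<and> (p = 0 \<or> p = q)},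
     colours = {0, 1},
     col = (\<lambda>(p, a, q). if 0 < p \<and> p = q \<and> a div 2 = p - 1 then {a mod 2} else {})\<rparr>"

lemma wf_pair_gba: "wf_gba (pair_gba n)"
  by (auto simp: wf_gba_def pair_gba_def)

lemma pair_gba_run_cases:
  assumes "is_run (pair_gba n) w r"
  obtains "\<And>j. r j = 0" | j0 where "0 < r j0" "\<And>j. j \<ge> j0 \<Longrightarrow> r j = r j0"
proof (cases "\<exists>j0. 0 < r j0")
  case True
  then obtain j0 where pos: "0 < r j0" by blast
  have stays: "r (j0 + m) = r j0" for m
  proof (induction m)
    case (Suc m)
    have "(r (j0 + m), w (j0 + m), r (Suc (j0 + m))) \<in> trans (pair_gba n)"
      using assms by (simp add: is_run_def)
    then show ?case using Suc pos by (simp add: pair_gba_def)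
  qed simp
  have "r j = r j0" if "j \<ge> j0" for j
    using stays[of "j - j0"] that by simp
  with pos show ?thesis by (rule that(2))
next
  case False
  then show ?thesis using that(1) by simp
qed

lemma colours_pair_gba: "colours (pair_gba n) = {0, 1}"
  by (simp add: pair_gba_def)

lemma col_pair_gba_zero: "col (pair_gba n) (0, a, 0) = {}"
  by (simp add: pair_gba_def)

lemma mem_col_pair_gba_loop_iff:
  assumes "0 < k"
  shows "c \<in> col (pair_gba n) (k, a, k) \<longleftrightarrow> c < 2 \<and> a = 2 * (k - 1) + c"
proof -
  have "c \<in> col (pair_gba n) (k, a, k) \<longleftrightarrow> a div 2 = k - 1 \<and> c = a mod 2"
    using assms by (simp add: pair_gba_def)
  moreover have "a div 2 = m \<and> c = a mod 2 \<longleftrightarrow> c < 2 \<and> a = 2 * m + c" for m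
    by auto
  ultimately show ?thesis by blast
qed

lemma lang_pair_gba: "lang (pair_gba n) = pair_lang n"
proof (intro set_eqI iffI)
  fix w assume "w \<in> lang (pair_gba n)"
  then obtain r where w: "w \<in> words (pair_gba n)" and r: "accepting_run (pair_gba n) w r"
    by (auto simp: lang_def)
  then have run: "is_run (pair_gba n) w r" by (simp add: accepting_run_def)
  show "w \<in> pair_lang n"
  proof (cases rule: pair_gba_run_cases[OF run])
    case 1
    then have False
      using accepting_run_eventually_const[OF wf_pair_gba w run, of 0 0] r
      by (auto simp: colours_pair_gba col_pair_gba_zero)
    then show ?thesis ..
  next
    case (2 j0)
    then obtain k where "0 < k" and const: "\<And>j. j \<ge> j0 \<Longrightarrow> r j = k" by blast
    have "k \<le> n"
      using run_in_states[OF wf_pair_gba run, of j0] const[of j0] by (simp add: pair_gba_def)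
    have "\<forall>c\<in>{0, 1}. \<exists>a\<in>limit w. c \<in> col (pair_gba n) (k, a, k)"
      using accepting_run_eventually_const[OF wf_pair_gba w run const] r
      by (simp add: colours_pair_gba)
    then have "2 * (k - 1) \<in> limit w" "Suc (2 * (k - 1)) \<in> limit w"
      by (auto simp: mem_col_pair_gba_loop_iff[OF \<open>0 < k\<close>])
    then have "has_pair n (limit w)"
      unfolding has_pair_def using \<open>0 < k\<close> \<open>k \<le> n\<close> by (intro exI[of _ "k - 1"]) auto
    then show ?thesis using w by (auto simp: pair_lang_def words_def pair_gba_def)
  qed
next
  fix w assume "w \<in> pair_lang n"
  then obtain i where "i < n" "2 * i \<in> limit w" "Suc (2 * i) \<in> limit w"
    and w: "w \<in> words (pair_gba n)"
    by (auto simp: pair_lang_def has_pair_def words_def pair_gba_def)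
  define r where "r j = (if j = 0 then 0 else Suc i)" for j :: nat
  have run: "is_run (pair_gba n) w r"
    using w \<open>i < n\<close> by (auto simp: is_run_def r_def words_def pair_gba_def)
  have "\<forall>c\<in>{0, 1}. \<exists>a\<in>limit w. c \<in> col (pair_gba n) (Suc i, a, Suc i)"
    using \<open>2 * i \<in> limit w\<close> \<open>Suc (2 * i) \<in> limit w\<close>
    by (auto simp: mem_col_pair_gba_loop_iff)
  then have "accepting_run (pair_gba n) w r"
    using accepting_run_eventually_const[OF wf_pair_gba w run, of 1 "Suc i"]
    by (simp add: r_def colours_pair_gba)
  then show "w \<in> lang (pair_gba n)" using w by (auto simp: lang_def)
qed

definition inf_zero_gba :: gba where
  "inf_zero_gba = \<lparr>states = {0}, alphabet = {0, 1}, init = 0,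
     trans = {0} \<times> {0, 1} \<times> {0}, colours = {0, 1},
     col = (\<lambda>(_, a, _). if a = 0 then {0, 1} else {})\<rparr>"

lemma wf_inf_zero_gba: "wf_gba inf_zero_gba"
  by (auto simp: wf_gba_def inf_zero_gba_def)

lemma lang_inf_zero_gba: "lang inf_zero_gba = {w. range w \<subseteq> {0, 1} \<and> 0 \<in> limit w}"
proof -
  have single: "states inf_zero_gba = {0}"
    by (simp add: inf_zero_gba_def)
  have words: "w \<in> words inf_zero_gba \<longleftrightarrow> range w \<subseteq> {0, 1}" for w
    by (simp add: words_def inf_zero_gba_def image_subset_iff)
  have loops: "(\<forall>j. (0, w j, 0) \<in> trans inf_zero_gba) \<longleftrightarrow> range w \<subseteq> {0, 1}"
    for w :: "nat \<Rightarrow> nat"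
    by (simp add: inf_zero_gba_def image_subset_iff)
  have colours: "(\<forall>c\<in>colours inf_zero_gba. \<exists>a\<in>limit w. c \<in> col inf_zero_gba (0, a, 0))
      \<longleftrightarrow> 0 \<in> limit w" for w
    by (auto simp: inf_zero_gba_def)
  show ?thesis
    unfolding set_eq_iff lang_single_state[OF wf_inf_zero_gba single] words loops colours
    by simp
qed

lemma single_state_inf_zero_colours_nonempty:
  assumes wf: "wf_gba B" and single: "states B = {s}"
    and lang: "lang B = {w. range w \<subseteq> {0, 1} \<and> 0 \<in> limit w}"
  shows "colours B \<noteq> {}"
proof
  assume no_colours: "colours B = {}"
  let ?w = "[1] \<frown> [0]\<^sup>\<omega>"
  have "range ?w = {0, 1}" "limit ?w = {0}"
    using range_iter[of "[0]"] by (simp_all del: build_cons)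
  then have "?w \<in> lang B" using lang by (simp del: build_cons)
  then have "?w 0 \<in> alphabet B" "(s, ?w 0, s) \<in> trans B"
    unfolding lang_single_state[OF wf single] words_def by blast+
  then have "[1]\<^sup>\<omega> \<in> lang B"
    using iter_in_lang_single_state[OF wf single, of "[1]"] no_colours by simp
  moreover have "limit [1]\<^sup>\<omega> = {1}" by simp
  ultimately show False using lang by simp
qed

lemma minimal_recogniser_single_state:
  assumes "recognises_same B A" "\<forall>B'. recognises_same B' A \<longrightarrow> card (states B) \<le> card (states B')"
    and "recognises_same C A" "card (states C) = 1"
  shows "states B = {init B}"
proof -
  have "finite (states B)" "init B \<in> states B" "card (states B) \<le> 1"
    using assms by (auto simp: recognises_same_def wf_gba_def)
  then show ?thesis by (auto simp: card_le_Suc0_iff_eq)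
qed

lemma inf_zero_gba_minimal_card_colours:
  assumes "recognises_same B inf_zero_gba"
    and "\<forall>B'. recognises_same B' inf_zero_gba \<longrightarrow> card (states B) \<le> card (states B')"
  shows "1 \<le> card (colours B)"
proof -
  have wf: "wf_gba B" and lang: "lang B = lang inf_zero_gba"
    using assms(1) by (simp_all add: recognises_same_def)
  have "recognises_same inf_zero_gba inf_zero_gba"
    using wf_inf_zero_gba by (simp add: recognises_same_def)
  moreover have "card (states inf_zero_gba) = 1"
    by (simp add: inf_zero_gba_def)
  ultimately have "states B = {init B}"
    by (rule minimal_recogniser_single_state[OF assms])
  then have "colours B \<noteq> {}"
    using single_state_inf_zero_colours_nonempty[OF wf _ lang[unfolded lang_inf_zero_gba]] by blast
  moreover have "finite (colours B)" using wf by (simp add: wf_gba_def)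
  ultimately show ?thesis by (simp add: Suc_le_eq card_gt_0_iff)
qed

lemma pair_gba_minimal_card_colours:
  assumes "0 < n" and "recognises_same B (pair_gba n)"
    and "\<forall>B'. recognises_same B' (pair_gba n) \<longrightarrow> card (states B) \<le> card (states B')"
  shows "2 ^ n \<le> card (colours B)"
proof -
  have wf: "wf_gba B" and lang: "lang B = pair_lang n"
    using assms(2) lang_pair_gba by (simp_all add: recognises_same_def)
  have "alphabet (transversal_gba n) = alphabet (pair_gba n)"
    by (simp add: transversal_gba_def pair_gba_def)
  then have "recognises_same (transversal_gba n) (pair_gba n)"
    using wf_transversal_gba lang_transversal_gba lang_pair_gba by (simp add: recognises_same_def)
  moreover have "card (states (transversal_gba n)) = 1"
    by (simp add: transversal_gba_def)
  ultimately have "states B = {init B}"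
    using minimal_recogniser_single_state[OF assms(2,3)] by blast
  then show ?thesis
    using single_state_pair_lang_card_colours[OF wf _ \<open>0 < n\<close> lang] by blast
qed

(* For n = 0 the pair language is empty (the alphabet is empty), and a one-state GBA
   without colours recognises it; so the case n = 0 needs its own witness. *)
definition witness_gba :: "nat \<Rightarrow> gba" where
  "witness_gba n = (if n = 0 then inf_zero_gba else pair_gba n)"

theorem proposition33:
  shows "\<exists>A :: nat \<Rightarrow> gba. \<forall>n.
     wf_gba (A n) \<and> card (states (A n)) = n + 1 \<and> card (colours (A n)) = 2 \<and>
     (\<forall>B. recognises_same B (A n) \<and>
          (\<forall>B'. recognises_same B' (A n) \<longrightarrow> card (states B) \<le> card (states B'))
          \<longrightarrow> card (colours B) \<ge> 2 ^ n)"
proof (intro exI[of _ witness_gba] allI conjI impI)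
  fix n B
  show "wf_gba (witness_gba n)"
    using wf_inf_zero_gba wf_pair_gba by (simp add: witness_gba_def)
  show "card (states (witness_gba n)) = n + 1" "card (colours (witness_gba n)) = 2"
    by (simp_all add: witness_gba_def inf_zero_gba_def pair_gba_def)
  assume "recognises_same B (witness_gba n) \<and>
    (\<forall>B'. recognises_same B' (witness_gba n) \<longrightarrow> card (states B) \<le> card (states B'))"
  then show "2 ^ n \<le> card (colours B)"
    using inf_zero_gba_minimal_card_colours pair_gba_minimal_card_colours
    by (cases "n = 0") (simp_all add: witness_gba_def)
qed

end
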